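(* Fix integers $q\ge2$, $L\ge1$, a real $r\in[0,\frac{L}{L+1})$ and a real $\varepsilon>0$. Then there is a function $\delta:\mathbb{N}\to\mathbb{R}$ with $\delta(n)\to0$ as $n\to\infty$ such that, for every $n$ with $rn\in\mathbb{N}$, if there exists an $(r,L)$ list-decodable code $C\subseteq[q]^n$ of rate at least $1-r-\varepsilon$ (i.e. $|C|\ge q^{(1-r-\varepsilon)n}$), then $L\ge \frac{r}{\varepsilon}+\delta(n)$.
   Context: $[q]=\{1,\dots,q\}$. A code is a subset $C\subseteq[q]^n$, of rate $\log_q(|C|)/n$. $B_t(v)$ is the Hamming ball of radius $t$ around $v\in[q]^n$. $C$ is $(r,L)$ list-decodable if $|B_{rn}(v)\cap C|\le L$ for all $v\in[q]^n$. *)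

theory Defs
  imports Complex_Main
begin

definition words :: "nat \<Rightarrow> nat \<Rightarrow> nat list set" where
  "words q n = {v. length v = n \<and> set v \<subseteq> {1..q}}"

definition hamming :: "nat list \<Rightarrow> nat list \<Rightarrow> nat" where
  "hamming u v = card {i. i < length u \<and> u ! i \<noteq> v ! i}"

definition hamming_ball :: "nat \<Rightarrow> nat \<Rightarrow> real \<Rightarrow> nat list \<Rightarrow> nat list set" where
  "hamming_ball q n t v = {w \<in> words q n. real (hamming v w) \<le> t}"

definition list_decodable :: "nat \<Rightarrow> nat \<Rightarrow> real \<Rightarrow> nat \<Rightarrow> nat list set \<Rightarrow> bool" where
  "list_decodable q n r L C \<longleftrightarrow>
     (\<forall>v \<in> words q n. card (hamming_ball q n (r * real n) v \<inter> C) \<le> L)"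

end

theory Submission
  imports Defs "HOL-Library.FuncSet"
begin

text \<open>
  If \<open>|C| > L q\<^sup>t\<close>, then by pigeonhole \<open>L + 1\<close> codewords share a prefix of length \<open>t\<close>.
  Cut the remaining \<open>n - t\<close> positions into \<open>L + 1\<close> blocks of length
  \<open>b = (n - t) div (L + 1)\<close> and let \<open>v\<close> copy the \<open>j\<close>-th of these codewords on the
  \<open>j\<close>-th block: every one of them is then within distance
  \<open>n - t - b \<le> L (n - t + 1) / (L + 1)\<close> of \<open>v\<close>. So list decodability forces
  \<open>|C| \<le> L q\<^sup>t\<close> as soon as this distance is at most \<open>r n\<close>, i.e. for
  \<open>t \<approx> n + 1 - (L + 1) r n / L\<close>. Comparing with \<open>|C| \<ge> q\<^bsup>(1 - r - \<epsilon>) n\<^esup>\<close> on a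
  logarithmic scale gives \<open>r n \<le> L (\<epsilon> n + log\<^sub>q L + 2)\<close>, which is
  \<open>L \<ge> r / \<epsilon> - O(1 / n)\<close>.
\<close>

lemma words_eq_lists: "words q n = {xs. set xs \<subseteq> {1..q} \<and> length xs = n}"
  unfolding words_def by auto

lemma finite_words: "finite (words q n)"
  unfolding words_eq_lists by (rule finite_lists_length_eq) simp

lemma card_words: "card (words q n) = q ^ n"
  unfolding words_eq_lists by (subst card_lists_length_eq) simp_all

lemma take_in_words: "w \<in> words q n \<Longrightarrow> t \<le> n \<Longrightarrow> take t w \<in> words q t"
  unfolding words_def using set_take_subset[of t w] by auto

lemma hamming_le_if_agree_on:
  assumes "length u = n" and "S \<subseteq> {..<n}" and "\<And>i. i \<in> S \<Longrightarrow> u ! i = v ! i"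
  shows "hamming u v \<le> n - card S"
proof -
  have "{i. i < length u \<and> u ! i \<noteq> v ! i} \<subseteq> {..<n} - S"
    using assms by auto
  then have "hamming u v \<le> card ({..<n} - S)"
    unfolding hamming_def by (intro card_mono) auto
  also have "\<dots> = n - card S"
    using assms(2) by (simp add: card_Diff_subset finite_subset)
  finally show ?thesis .
qed

lemma mult_diff_div_le: "k * (m - m div k) \<le> (k - 1) * (m + 1)" for k m :: nat
proof (cases "k = 0")
  case False
  define b s where "b = m div k" and "s = m mod k"
  have m: "m = k * b + s" unfolding b_def s_def by simp
  have s: "s < k" unfolding s_def using False by simp
  have "m - b = (k - 1) * b + s" using m False by (cases k) auto
  then have "k * (m - m div k) = (k - 1) * (k * b) + k * s"
    unfolding b_def[symmetric] by (simp add: algebra_simps)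
  also have "k * s \<le> (k - 1) * s + (k - 1)"
    using s False by (cases k) auto
  finally show ?thesis unfolding m by (simp add: algebra_simps)
qed simp

lemma ex_word_close_to_words_with_common_prefix:
  fixes h :: "nat \<Rightarrow> nat list"
  assumes "0 < k" and "t \<le> n"
    and h_words: "\<And>j. j < k \<Longrightarrow> h j \<in> words q n"
    and h_prefix: "\<And>j. j < k \<Longrightarrow> take t (h j) = p"
  shows "\<exists>v \<in> words q n. \<forall>j<k. hamming v (h j) \<le> (n - t) - (n - t) div k"
proof -
  define b where "b = (n - t) div k"
  \<comment> \<open>the last block also absorbs the \<open>(n - t) mod k\<close> leftover positions\<close>
  define block where "block i = (if i < t then 0 else min (k - 1) ((i - t) div b))" for i
  define v where "v = map (\<lambda>i. h (block i) ! i) [0..<n]"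
  have block_lt: "block i < k" for i
    unfolding block_def using \<open>0 < k\<close> by auto
  have v_nth: "v ! i = h (block i) ! i" if "i < n" for i
    unfolding v_def using that by simp
  have "v \<in> words q n"
  proof -
    have "v ! i \<in> {1..q}" if "i < n" for i
      using h_words[OF block_lt[of i]] that unfolding v_nth[OF that] words_def
      by (auto dest: nth_mem)
    then show ?thesis
      unfolding words_def v_def by (auto simp: in_set_conv_nth)
  qed
  moreover have "hamming v (h j) \<le> (n - t) - b" if "j < k" for j
  proof -
    define S where "S = {..<t} \<union> {t + j * b..<t + j * b + b}"
    have "t + j * b + b \<le> t + k * b"
      using \<open>j < k\<close> mult_le_mono1[of "Suc j" k b] by simp
    also have "k * b \<le> n - t"
      unfolding b_def by simp
    finally have S_sub: "S \<subseteq> {..<n}"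
      using \<open>t \<le> n\<close> unfolding S_def by auto
    have "card S = t + b"
      unfolding S_def by (subst card_Un_disjoint) auto
    moreover have "v ! i = h j ! i" if "i \<in> S" for i
    proof (cases "i < t")
      case True
      then have "v ! i = take t (h 0) ! i" and "h j ! i = take t (h j) ! i"
        using v_nth[of i] \<open>t \<le> n\<close> unfolding block_def by simp_all
      then show ?thesis
        using h_prefix[OF \<open>0 < k\<close>] h_prefix[OF \<open>j < k\<close>] by simp
    next
      case False
      then have "(i - t) div b = j"
        using \<open>i \<in> S\<close> unfolding S_def by (intro div_nat_eqI) (auto simp: algebra_simps)
      then have "block i = j"
        using False \<open>j < k\<close> unfolding block_def by simp
      then show ?thesis
        using v_nth S_sub \<open>i \<in> S\<close> by auto
    qed
    ultimately show ?thesis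
      using hamming_le_if_agree_on[of v n S "h j"] S_sub by (simp add: v_def)
  qed
  ultimately show ?thesis
    unfolding b_def by blast
qed

lemma list_decodable_card_le:
  assumes C: "C \<subseteq> words q n" and dec: "list_decodable q n r L C" and "t \<le> n"
    and radius: "real L * (real (n - t) + 1) \<le> real (L + 1) * (r * real n)"
  shows "card C \<le> L * q ^ t"
proof (rule ccontr)
  assume "\<not> card C \<le> L * q ^ t"
  then have C_big: "L * card (words q t) < card C"
    by (simp add: card_words)
  have "finite C"
    using C finite_words finite_subset by blast
  have "C \<noteq> {}"
    using C_big by auto
  then have "words q t \<noteq> {}" and "take t \<in> C \<rightarrow> words q t"
    using C take_in_words \<open>t \<le> n\<close> by blast+
  then obtain p where "card C \<le> card (take t -` {p} \<inter> C) * card (words q t)"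
    using pigeonhole_card[OF _ \<open>finite C\<close> finite_words] by blast
  then have "L * card (words q t) < card (take t -` {p} \<inter> C) * card (words q t)"
    using C_big by linarith
  then have "L + 1 \<le> card (take t -` {p} \<inter> C)"
    by (simp add: Suc_le_eq)
  then obtain F where F: "F \<subseteq> take t -` {p} \<inter> C" "card F = L + 1" "finite F"
    by (rule obtain_subset_with_card_n)
  then obtain h where h: "bij_betw h {0..<L + 1} F"
    using ex_bij_betw_nat_finite by fastforce
  then have F_eq: "F = h ` {0..<L + 1}"
    by (simp add: bij_betw_imp_surj_on)
  have h_C: "h j \<in> C" and h_prefix: "take t (h j) = p" if "j < L + 1" for j
  proof -
    have "h j \<in> F"
      unfolding F_eq using that by simp
    then show "h j \<in> C" and "take t (h j) = p"
      using F(1) by auto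
  qed
  have "\<exists>v \<in> words q n. \<forall>j<L + 1. hamming v (h j) \<le> (n - t) - (n - t) div (L + 1)"
    using h_C h_prefix C \<open>t \<le> n\<close> by (intro ex_word_close_to_words_with_common_prefix) auto
  then obtain v where "v \<in> words q n"
    and v: "\<And>j. j < L + 1 \<Longrightarrow> hamming v (h j) \<le> (n - t) - (n - t) div (L + 1)"
    by blast
  have "F \<subseteq> hamming_ball q n (r * real n) v \<inter> C"
  proof
    fix w assume "w \<in> F"
    then obtain j where "j < L + 1" and w: "w = h j"
      unfolding F_eq by auto
    have "(L + 1) * hamming v w \<le> (L + 1) * ((n - t) - (n - t) div (L + 1))"
      using v[OF \<open>j < L + 1\<close>] unfolding w by (rule mult_le_mono2)
    also have "\<dots> \<le> L * (n - t + 1)"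
      using mult_diff_div_le[of "L + 1" "n - t"] by simp
    finally have "real (L + 1) * hamming v w \<le> real L * (real (n - t) + 1)"
      by (metis of_nat_1 of_nat_add of_nat_mono of_nat_mult)
    then have "real (L + 1) * hamming v w \<le> real (L + 1) * (r * real n)"
      using radius by linarith
    then have "hamming v w \<le> r * real n"
      by (rule mult_left_le_imp_le) simp
    then show "w \<in> hamming_ball q n (r * real n) v \<inter> C"
      using \<open>w \<in> F\<close> F C unfolding hamming_ball_def by auto
  qed
  then have "L + 1 \<le> card (hamming_ball q n (r * real n) v \<inter> C)"
    using F \<open>finite C\<close> by (metis card_mono finite_Int)
  moreover have "card (hamming_ball q n (r * real n) v \<inter> C) \<le> L"
    using dec \<open>v \<in> words q n\<close> unfolding list_decodable_def by blast
  ultimately show False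
    by simp
qed

lemma list_decodable_card_le_powr:
  assumes "1 \<le> q" and "1 \<le> L" and r: "(real L + 1) * r \<le> real L"
    and C: "C \<subseteq> words q n" and dec: "list_decodable q n r L C"
  shows "real (card C) \<le> real L * real q powr (real n + 2 - (real L + 1) * r * real n / real L)"
proof -
  \<comment> \<open>the radius condition of \<open>list_decodable_card_le\<close> holds iff \<open>x \<le> t\<close>\<close>
  define x where "x = real n + 1 - (real L + 1) * r * real n / real L"
  define t where "t = nat \<lceil>x\<rceil>"
  have "(real L + 1) * r * real n \<le> real L * real n"
    using r by (simp add: mult_right_mono)
  then have "(real L + 1) * r * real n / real L \<le> real n"
    using \<open>1 \<le> L\<close> by (simp add: pos_divide_le_eq mult.commute)
  then have "1 \<le> x"
    unfolding x_def by linarith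
  then have x_le_t: "x \<le> real t" and t_lt: "real t < x + 1"
    unfolding t_def by linarith+
  have "real (card C) \<le> real L * real q ^ t"
  proof (cases "t \<le> n")
    case True
    have "real L * (real (n - t) + 1) \<le> real L * (real n - x + 1)"
      using True x_le_t by (intro mult_left_mono) (auto simp: of_nat_diff)
    also have "\<dots> = real (L + 1) * (r * real n)"
      unfolding x_def using \<open>1 \<le> L\<close> by (simp add: field_simps)
    finally have "card C \<le> L * q ^ t"
      using list_decodable_card_le[OF C dec True] by blast
    then show ?thesis
      by (metis of_nat_le_iff of_nat_mult of_nat_power)
  next
    case False
    have "card C \<le> q ^ n"
      using card_mono[OF finite_words C] by (simp add: card_words)
    also have "\<dots> \<le> q ^ t"
      using False \<open>1 \<le> q\<close> by (simp add: power_increasing)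
    also have "\<dots> \<le> L * q ^ t"
      using \<open>1 \<le> L\<close> by simp
    finally show ?thesis
      by (metis of_nat_le_iff of_nat_mult of_nat_power)
  qed
  also have "\<dots> = real L * real q powr real t"
    using \<open>1 \<le> q\<close> by (simp add: powr_realpow)
  also have "\<dots> \<le> real L * real q powr (x + 1)"
    using \<open>1 \<le> q\<close> t_lt by (intro mult_left_mono powr_mono) auto
  finally show ?thesis
    unfolding x_def by (simp add: algebra_simps)
qed

lemma list_decodable_radius_le:
  assumes "2 \<le> q" and "1 \<le> L" and r: "(real L + 1) * r \<le> real L"
    and C: "C \<subseteq> words q n" and dec: "list_decodable q n r L C"
    and rate: "real q powr ((1 - r - \<epsilon>) * real n) \<le> real (card C)"
  shows "r * real n \<le> real L * (\<epsilon> * real n + log (real q) (real L) + 2)"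
proof -
  define e where "e = real n + 2 - (real L + 1) * r * real n / real L"
  have "real q powr ((1 - r - \<epsilon>) * real n) \<le> real L * real q powr e"
    using rate list_decodable_card_le_powr[OF _ \<open>1 \<le> L\<close> r C dec] \<open>2 \<le> q\<close>
    unfolding e_def by fastforce
  also have "\<dots> = real q powr (log (real q) (real L) + e)"
    using \<open>2 \<le> q\<close> \<open>1 \<le> L\<close> by (simp add: powr_add)
  finally have "(1 - r - \<epsilon>) * real n \<le> log (real q) (real L) + e"
    using \<open>2 \<le> q\<close> by simp
  moreover have "(real L + 1) * r * real n / real L = r * real n + r * real n / real L"
    using \<open>1 \<le> L\<close> by (simp add: field_simps)
  ultimately have "r * real n / real L \<le> \<epsilon> * real n + log (real q) (real L) + 2"
    unfolding e_def by (simp add: algebra_simps)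
  then show ?thesis
    using \<open>1 \<le> L\<close> by (simp add: pos_divide_le_eq mult.commute)
qed

theorem proposition3p4:
  fixes q L :: nat and r \<epsilon> :: real
  assumes "q \<ge> 2" and "L \<ge> 1"
    and "0 \<le> r" and "r < real L / (real L + 1)"
    and "\<epsilon> > 0"
  shows "\<exists>\<delta> :: nat \<Rightarrow> real. \<delta> \<longlonglongrightarrow> 0 \<and>
    (\<forall>n :: nat. (\<exists>k :: nat. r * real n = real k) \<longrightarrow>
       (\<forall>C. C \<subseteq> words q n \<and> list_decodable q n r L C
            \<and> real (card C) \<ge> real q powr ((1 - r - \<epsilon>) * real n)
          \<longrightarrow> real L \<ge> r / \<epsilon> + \<delta> n))"
proof -
  \<comment> \<open>balls have real radius\<close>
  define K where "K = real L * (log (real q) (real L) + 2)"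
  define \<delta> where "\<delta> n = - (K + r) / (\<epsilon> * real (Suc n))" for n
  have "\<delta> \<longlonglongrightarrow> 0"
    unfolding \<delta>_def using LIMSEQ_Suc[OF lim_const_over_n[of "- (K + r) / \<epsilon>"]] by simp
  moreover have "r / \<epsilon> + \<delta> n \<le> real L"
    if "C \<subseteq> words q n" and "list_decodable q n r L C"
      and "real q powr ((1 - r - \<epsilon>) * real n) \<le> real (card C)" for n C
  proof -
    have "(real L + 1) * r \<le> real L"
      using assms(4) by (simp add: field_simps)
    then have "r * real n \<le> real L * \<epsilon> * real n + K"
      using list_decodable_radius_le assms(1,2) that unfolding K_def by (simp add: algebra_simps)
    moreover have "0 \<le> real L * \<epsilon>"
      using \<open>\<epsilon> > 0\<close> by simp
    ultimately have "r * real n - K \<le> real L * (\<epsilon> * real (Suc n))"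
      by (simp add: algebra_simps)
    moreover have "r / \<epsilon> + \<delta> n = (r * real n - K) / (\<epsilon> * real (Suc n))"
      unfolding \<delta>_def using \<open>\<epsilon> > 0\<close> by (simp add: divide_simps) (simp add: algebra_simps)
    ultimately show ?thesis
      using \<open>\<epsilon> > 0\<close> by (simp add: pos_divide_le_eq)
  qed
  ultimately show ?thesis
    by blast
qed

end
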